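(* There is no $(3,2)$-critical graph that contains exactly three odd cycles.
   Context: All graphs are finite and simple. An odd cycle is a cycle (subgraph) of odd length. For a graph $G$, ${\rm es}_{\chi}(G)$ is the minimum number of edges of $G$ whose removal results in a spanning subgraph $G_1$ with $\chi(G_1)=\chi(G)-1$. $G$ is edge-stability critical if ${\rm es}_{\chi}(G-e)<{\rm es}_{\chi}(G)$ for every edge $e$. $G$ is $(3,2)$-critical if it is edge-stability critical with $\chi(G)=3$ and ${\rm es}_{\chi}(G)=2$. *)

theory Defs
  imports Main
begin

definition simple_graph :: "'a set \<Rightarrow> 'a set set \<Rightarrow> bool" where
  "simple_graph V E \<longleftrightarrow> finite V \<and> (\<forall>e\<in>E. e \<subseteq> V \<and> card e = 2)"

definition colouring :: "'a set \<Rightarrow> 'a set set \<Rightarrow> nat \<Rightarrow> ('a \<Rightarrow> nat) \<Rightarrow> bool" where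
  "colouring V E k f \<longleftrightarrow> (\<forall>v\<in>V. f v < k) \<and> (\<forall>e\<in>E. \<forall>u\<in>e. \<forall>v\<in>e. u \<noteq> v \<longrightarrow> f u \<noteq> f v)"

definition chromatic_number :: "'a set \<Rightarrow> 'a set set \<Rightarrow> nat" where
  "chromatic_number V E = (LEAST k. \<exists>f. colouring V E k f)"

definition es_chi :: "'a set \<Rightarrow> 'a set set \<Rightarrow> nat" where
  "es_chi V E = (LEAST m. \<exists>F. F \<subseteq> E \<and> card F = m \<and>
       chromatic_number V (E - F) = chromatic_number V E - 1)"

definition edge_stability_critical :: "'a set \<Rightarrow> 'a set set \<Rightarrow> bool" where
  "edge_stability_critical V E \<longleftrightarrow> (\<forall>e\<in>E. es_chi V (E - {e}) < es_chi V E)"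

definition critical_3_2 :: "'a set \<Rightarrow> 'a set set \<Rightarrow> bool" where
  "critical_3_2 V E \<longleftrightarrow> edge_stability_critical V E \<and> chromatic_number V E = 3 \<and> es_chi V E = 2"

definition is_cycle :: "'a set set \<Rightarrow> 'a list \<Rightarrow> bool" where
  "is_cycle E vs \<longleftrightarrow> length vs \<ge> 3 \<and> distinct vs \<and>
     (\<forall>i<length vs. {vs ! i, vs ! ((i + 1) mod length vs)} \<in> E)"

definition cycle_edges :: "'a list \<Rightarrow> 'a set set" where
  "cycle_edges vs = {{vs ! i, vs ! ((i + 1) mod length vs)} | i. i < length vs}"

text \<open>Odd cycles as subgraphs, each identified by its edge set.\<close>
definition odd_cycles :: "'a set set \<Rightarrow> 'a set set set" where
  "odd_cycles E = {cycle_edges vs | vs. is_cycle E vs \<and> odd (length vs)}"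

end

theory Submission
  imports Defs "HOL-Library.Transitive_Closure_Table"
begin

text \<open>In a (3,2)-critical graph no edge lies on all odd cycles, since deleting it would leave a
  bipartite graph and so give \<open>es\<^sub>\<chi> = 1\<close>; and every edge \<open>e\<close> has a partner \<open>f\<close> such that
  every odd cycle meets \<open>{e, f}\<close>, because \<open>es\<^sub>\<chi>(G - e) \<le> 1\<close>. Suppose \<open>C\<^sub>1, C\<^sub>2, C\<^sub>3\<close> were
  the only odd cycles. Their symmetric difference \<open>Z\<close> has an odd number of edges and meets every
  edge cut evenly, so it is not bipartite and contains an odd cycle, say \<open>C\<^sub>1\<close>. As no edge lies
  on all three cycles, \<open>C\<^sub>1\<close> is disjoint from \<open>C\<^sub>2\<close> and \<open>C\<^sub>3\<close>. An edge \<open>e\<close> lying in just one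
  of \<open>C\<^sub>2, C\<^sub>3\<close> then has a partner \<open>f\<close> in \<open>C\<^sub>1\<close> and in the other one, a contradiction.\<close>

section \<open>Colourings and the chromatic number\<close>

lemma simple_graph_subset: "simple_graph V E \<Longrightarrow> S \<subseteq> E \<Longrightarrow> simple_graph V S"
  unfolding simple_graph_def by blast

lemma simple_graph_finite_edges: "simple_graph V E \<Longrightarrow> finite E"
  unfolding simple_graph_def by (meson Pow_iff finite_Pow_iff finite_subset subsetI)

lemma colouring_mono:
  "colouring V S k f \<Longrightarrow> V' \<subseteq> V \<Longrightarrow> S' \<subseteq> S \<Longrightarrow> k \<le> k' \<Longrightarrow> colouring V' S' k' f"
  unfolding colouring_def by (meson less_le_trans subsetD)

lemma colouring_edge_iff:
  assumes "\<forall>e\<in>S. card e = 2"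
  shows "colouring V S k f \<longleftrightarrow> (\<forall>v\<in>V. f v < k) \<and> (\<forall>x y. {x, y} \<in> S \<longrightarrow> f x \<noteq> f y)"
proof -
  have "(\<forall>u\<in>e. \<forall>v\<in>e. u \<noteq> v \<longrightarrow> f u \<noteq> f v) \<longleftrightarrow> (\<forall>x y. e = {x, y} \<longrightarrow> f x \<noteq> f y)"
    if "e \<in> S" for e
  proof -
    from assms that obtain a b where e: "e = {a, b}" "a \<noteq> b"
      by (meson card_2_iff)
    then have "(\<forall>u\<in>e. \<forall>v\<in>e. u \<noteq> v \<longrightarrow> f u \<noteq> f v) \<longleftrightarrow> f a \<noteq> f b"
      by auto
    moreover have "(\<forall>x y. e = {x, y} \<longrightarrow> f x \<noteq> f y) \<longleftrightarrow> f a \<noteq> f b"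
      using e by (metis doubleton_eq_iff)
    ultimately show ?thesis
      by blast
  qed
  then have "(\<forall>e\<in>S. \<forall>u\<in>e. \<forall>v\<in>e. u \<noteq> v \<longrightarrow> f u \<noteq> f v)
      \<longleftrightarrow> (\<forall>e\<in>S. \<forall>x y. e = {x, y} \<longrightarrow> f x \<noteq> f y)"
    by (rule ball_cong[OF refl])
  also have "\<dots> \<longleftrightarrow> (\<forall>x y. {x, y} \<in> S \<longrightarrow> f x \<noteq> f y)"
    by auto
  finally show ?thesis
    unfolding colouring_def by simp
qed

lemma chromatic_number_le: "colouring V S k f \<Longrightarrow> chromatic_number V S \<le> k"
  unfolding chromatic_number_def by (rule Least_le) blast

lemma colouring_chromatic_number:
  assumes "simple_graph V S"
  shows "\<exists>f. colouring V S (chromatic_number V S) f"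
proof -
  obtain f and n :: nat where f: "f ` V = {i. i < n}" "inj_on f V"
    using assms finite_imp_inj_to_nat_seg unfolding simple_graph_def by metis
  have "colouring V S n f"
    unfolding colouring_def
  proof (intro conjI ballI impI)
    show "f v < n" if "v \<in> V" for v
      using f(1) that by auto
    show "f u \<noteq> f v" if "e \<in> S" "u \<in> e" "v \<in> e" "u \<noteq> v" for e u v
      using assms that f(2) unfolding simple_graph_def by (meson inj_onD subsetD)
  qed
  then have "\<exists>k f. colouring V S k f"
    by blast
  then show ?thesis
    unfolding chromatic_number_def by (rule LeastI_ex)
qed

lemma chromatic_number_le_iff:
  assumes "simple_graph V S"
  shows "chromatic_number V S \<le> k \<longleftrightarrow> (\<exists>f. colouring V S k f)"
  using colouring_chromatic_number[OF assms] chromatic_number_le colouring_mono by blast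

lemma chromatic_number_mono:
  assumes "simple_graph V S" "S' \<subseteq> S"
  shows "chromatic_number V S' \<le> chromatic_number V S"
proof -
  obtain f where "colouring V S (chromatic_number V S) f"
    using colouring_chromatic_number[OF assms(1)] by blast
  then have "colouring V S' (chromatic_number V S) f"
    using assms(2) colouring_mono by blast
  then show ?thesis
    by (rule chromatic_number_le)
qed

lemma chromatic_number_insert_le:
  assumes G: "simple_graph V (insert e S)"
  shows "chromatic_number V (insert e S) \<le> chromatic_number V S + 1"
proof -
  define k where "k = chromatic_number V S"
  have card2: "\<forall>e'\<in>insert e S. card e' = 2"
    using G unfolding simple_graph_def by blast
  obtain f where "colouring V S k f"
    unfolding k_def using colouring_chromatic_number simple_graph_subset[OF G] by blast
  moreover have "\<forall>e'\<in>S. card e' = 2"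
    using card2 by blast
  ultimately have f_lt: "\<forall>v\<in>V. f v < k" and f_edge: "\<And>x y. {x, y} \<in> S \<Longrightarrow> f x \<noteq> f y"
    by (simp_all add: colouring_edge_iff)
  obtain u w where e: "e = {u, w}"
    using card2 by (meson card_2_iff insertI1)
  define g where "g = f(u := k)"
  have "g x \<noteq> g y" if xy: "{x, y} \<in> insert e S" for x y
  proof -
    have "{x, y} \<subseteq> V" "card {x, y} = 2"
      using G xy unfolding simple_graph_def by (meson, meson)
    then have "f x < k" "f y < k" "x \<noteq> y"
      using f_lt by (auto split: if_splits)
    moreover have "{x, y} \<in> S" if "x \<noteq> u" "y \<noteq> u"
      using xy that e by auto
    ultimately show ?thesis
      unfolding g_def using f_edge by (cases "x = u"; cases "y = u") auto
  qed
  moreover have "\<forall>v\<in>V. g v < k + 1"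
    unfolding g_def using f_lt by auto
  ultimately have "colouring V (insert e S) (k + 1) g"
    unfolding colouring_edge_iff[OF card2] by blast
  then show ?thesis
    unfolding k_def by (rule chromatic_number_le)
qed

lemma chromatic_number_empty:
  assumes "V \<noteq> {}"
  shows "chromatic_number V {} = 1"
proof -
  have one: "colouring V {} 1 (\<lambda>_. 0)"
    unfolding colouring_def by simp
  then have "\<exists>k f. colouring V {} k f"
    by blast
  then have "\<exists>f. colouring V {} (chromatic_number V {}) f"
    unfolding chromatic_number_def by (rule LeastI_ex)
  then have "chromatic_number V {} \<noteq> 0"
    using assms unfolding colouring_def by auto
  moreover have "chromatic_number V {} \<le> 1"
    using one by (rule chromatic_number_le)
  ultimately show ?thesis
    by linarith
qed

lemma chromatic_number_intermediate:
  assumes "simple_graph V S" "V \<noteq> {}" "1 \<le> k" "k \<le> chromatic_number V S"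
  shows "\<exists>F\<subseteq>S. chromatic_number V (S - F) = k"
proof -
  have "finite S"
    using assms(1) by (rule simple_graph_finite_edges)
  then show ?thesis
    using assms
  proof (induction S arbitrary: k rule: finite_induct)
    case empty
    then have "chromatic_number V ({} - {}) = k"
      using chromatic_number_empty[OF assms(2)] by simp
    then show ?case
      by blast
  next
    case (insert e S)
    have S: "simple_graph V S"
      using insert.prems(1) by (rule simple_graph_subset) blast
    show ?case
    proof (cases "k \<le> chromatic_number V S")
      case True
      then obtain F where F: "F \<subseteq> S" "chromatic_number V (S - F) = k"
        using insert.IH[OF S] insert.prems by blast
      have "insert e S - insert e F = S - F"
        using insert.hyps(2) by blast
      moreover have "insert e F \<subseteq> insert e S"
        using F(1) by blast
      ultimately show ?thesis
        using F(2) by metis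
    next
      case False
      then have "k = chromatic_number V (insert e S)"
        using chromatic_number_insert_le[OF insert.prems(1)] insert.prems(4) by linarith
      then show ?thesis
        by (metis Diff_empty empty_subsetI)
    qed
  qed
qed

lemma es_chi_le:
  "F \<subseteq> S \<Longrightarrow> chromatic_number V (S - F) = chromatic_number V S - 1 \<Longrightarrow> es_chi V S \<le> card F"
  unfolding es_chi_def by (rule Least_le) blast

lemma es_chi_witness:
  assumes "simple_graph V S" "2 \<le> chromatic_number V S"
  obtains F where "F \<subseteq> S" "card F = es_chi V S"
    "chromatic_number V (S - F) = chromatic_number V S - 1"
proof -
  have "V \<noteq> {}"
  proof
    assume "V = {}"
    moreover have "S = {}" if "V = {}"
      using assms(1) that unfolding simple_graph_def by fastforce
    ultimately have "colouring V S 0 f" for f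
      unfolding colouring_def by simp
    then show False
      using assms(2) chromatic_number_le by fastforce
  qed
  moreover have "1 \<le> chromatic_number V S - 1"
    using assms(2) by linarith
  ultimately obtain F where "F \<subseteq> S" "chromatic_number V (S - F) = chromatic_number V S - 1"
    using chromatic_number_intermediate[OF assms(1)] by (meson diff_le_self)
  then have "\<exists>m F. F \<subseteq> S \<and> card F = m \<and> chromatic_number V (S - F) = chromatic_number V S - 1"
    by blast
  then have "\<exists>F. F \<subseteq> S \<and> card F = es_chi V S \<and> chromatic_number V (S - F) = chromatic_number V S - 1"
    unfolding es_chi_def by (rule LeastI_ex)
  then show ?thesis
    using that by blast
qed

section \<open>Edge cuts and the cycle space\<close>

definition cut_edges :: "('a \<Rightarrow> bool) \<Rightarrow> 'a set set \<Rightarrow> 'a set set" where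
  "cut_edges P S = {e \<in> S. \<exists>x\<in>e. \<exists>y\<in>e. P x \<and> \<not> P y}"

text \<open>\<open>even_cuts S\<close> says that \<open>S\<close> lies in the cycle space: it meets every edge cut evenly.\<close>
definition even_cuts :: "'a set set \<Rightarrow> bool" where
  "even_cuts S \<longleftrightarrow> (\<forall>P. even (card (cut_edges P S)))"

lemma cut_edges_doubleton: "{x, y} \<in> cut_edges P S \<longleftrightarrow> {x, y} \<in> S \<and> P x \<noteq> P y"
  unfolding cut_edges_def by auto

lemma card_sym_diff:
  assumes "finite A" "finite B"
  shows "card (sym_diff A B) + 2 * card (A \<inter> B) = card A + card B"
proof -
  have "card (sym_diff A B) = card (A - B) + card (B - A)"
    using assms by (intro card_Un_disjoint) auto
  moreover have "card A = card (A \<inter> B) + card (A - B)" "card B = card (A \<inter> B) + card (B - A)"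
    using card_Int_Diff assms by (metis, metis Int_commute)
  ultimately show ?thesis
    by linarith
qed

lemma even_card_sym_diff_iff:
  "finite A \<Longrightarrow> finite B \<Longrightarrow> even (card (sym_diff A B)) \<longleftrightarrow> (even (card A) \<longleftrightarrow> even (card B))"
  using card_sym_diff[of A B] by (metis even_add even_mult_iff even_numeral)

lemma even_cuts_sym_diff:
  assumes "finite A" "finite B" "even_cuts A" "even_cuts B"
  shows "even_cuts (sym_diff A B)"
  unfolding even_cuts_def
proof
  fix P
  have "cut_edges P (sym_diff A B) = sym_diff (cut_edges P A) (cut_edges P B)"
    unfolding cut_edges_def by blast
  moreover have "finite (cut_edges P A)" "finite (cut_edges P B)"
    using assms(1,2) unfolding cut_edges_def by simp_all
  ultimately show "even (card (cut_edges P (sym_diff A B)))"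
    using assms(3,4) even_card_sym_diff_iff unfolding even_cuts_def by metis
qed

lemma even_card_if_even_cuts_two_colouring:
  assumes "even_cuts S" "colouring V S 2 c" "\<forall>e\<in>S. e \<subseteq> V \<and> card e = 2"
  shows "even (card S)"
proof -
  have "cut_edges (\<lambda>x. c x = 0) S = S"
  proof (intro equalityI subsetI)
    fix e assume "e \<in> S"
    with assms(3) have "e \<subseteq> V" "card e = 2"
      by blast+
    then obtain x y where "e = {x, y}" "x \<noteq> y" "x \<in> V" "y \<in> V"
      by (auto simp: card_2_iff)
    with \<open>e \<in> S\<close> assms(2) have "c x \<noteq> c y" "c x < 2" "c y < 2"
      unfolding colouring_def by auto
    with \<open>e \<in> S\<close> \<open>e = {x, y}\<close> show "e \<in> cut_edges (\<lambda>x. c x = 0) S"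
      by (auto simp: cut_edges_doubleton)
  qed (simp add: cut_edges_def)
  then show ?thesis
    using assms(1) unfolding even_cuts_def by metis
qed

text \<open>Modulo 2, \<open>[q i \<noteq> q (\<sigma> i)] \<equiv> q i + q (\<sigma> i)\<close>, and reindexing along \<open>\<sigma>\<close> shows that both
  summands contribute the same total.\<close>
lemma even_card_disagreements:
  fixes q :: "'a \<Rightarrow> bool"
  assumes "finite A" "bij_betw \<sigma> A A"
  shows "even (card {i \<in> A. q i \<noteq> q (\<sigma> i)})"
proof -
  have "(\<Sum>i\<in>A. of_bool (q i \<noteq> q (\<sigma> i))) + 2 * (\<Sum>i\<in>A. of_bool (q i \<and> q (\<sigma> i)))
      = (\<Sum>i\<in>A. of_bool (q i \<noteq> q (\<sigma> i)) + 2 * of_bool (q i \<and> q (\<sigma> i)) :: nat)"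
    by (simp add: sum.distrib sum_distrib_left)
  also have "\<dots> = (\<Sum>i\<in>A. of_bool (q i) + of_bool (q (\<sigma> i)))"
    by (rule sum.cong) auto
  also have "\<dots> = (\<Sum>i\<in>A. of_bool (q i)) + (\<Sum>i\<in>A. of_bool (q (\<sigma> i)))"
    by (rule sum.distrib)
  also have "(\<Sum>i\<in>A. of_bool (q (\<sigma> i))) = (\<Sum>i\<in>A. of_bool (q i) :: nat)"
    using assms(2) by (rule sum.reindex_bij_betw)
  finally have "even (\<Sum>i\<in>A. of_bool (q i \<noteq> q (\<sigma> i)) :: nat)"
    by presburger
  then show ?thesis
    using assms(1) by (simp add: Int_def conj_commute)
qed

lemma bij_betw_Suc_mod: "bij_betw (\<lambda>i. Suc i mod n) {..<n} {..<n}"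
proof -
  have "inj_on (\<lambda>i. Suc i mod n) {..<n}"
    by (auto intro!: inj_onI simp: mod_Suc split: if_splits)
  moreover have "(\<lambda>i. Suc i mod n) ` {..<n} \<subseteq> {..<n}"
    by auto
  ultimately show ?thesis
    by (simp add: bij_betw_def endo_inj_surj)
qed

lemma cycle_edges_image:
  "cycle_edges vs = (\<lambda>i. {vs ! i, vs ! (Suc i mod length vs)}) ` {..<length vs}"
  unfolding cycle_edges_def by auto

lemma cycle_edges_subset: "is_cycle E vs \<Longrightarrow> cycle_edges vs \<subseteq> E"
  unfolding cycle_edges_def is_cycle_def by auto

lemma is_cycle_mono: "is_cycle E vs \<Longrightarrow> E \<subseteq> E' \<Longrightarrow> is_cycle E' vs"
  unfolding is_cycle_def by blast

lemma inj_on_cycle_edge: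
  assumes "is_cycle E vs"
  shows "inj_on (\<lambda>i. {vs ! i, vs ! (Suc i mod length vs)}) {..<length vs}"
proof (rule inj_onI)
  define n where "n = length vs"
  fix i j
  assume "i \<in> {..<length vs}" "j \<in> {..<length vs}"
    and eq: "{vs ! i, vs ! (Suc i mod length vs)} = {vs ! j, vs ! (Suc j mod length vs)}"
  then have i: "i < n" "Suc i mod n < n" and j: "j < n" "Suc j mod n < n"
    unfolding n_def by (auto intro!: mod_less_divisor)
  have "3 \<le> n" "distinct vs"
    using assms unfolding is_cycle_def n_def by auto
  then have idx: "vs ! a = vs ! b \<longleftrightarrow> a = b" if "a < n" "b < n" for a b
    using that nth_eq_iff_index_eq unfolding n_def by blast
  show "i = j"
  proof (rule ccontr)
    assume "i \<noteq> j"
    then have "i = Suc j mod n" "j = Suc i mod n"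
      using eq idx i j unfolding n_def by (metis doubleton_eq_iff)+
    moreover have "Suc a mod n = (if Suc a = n then 0 else Suc a)" if "a < n" for a
      using that by (simp add: mod_Suc)
    ultimately show False
      using i(1) j(1) \<open>3 \<le> n\<close> by (auto split: if_splits)
  qed
qed

lemma card_cycle_edges: "is_cycle E vs \<Longrightarrow> card (cycle_edges vs) = length vs"
  unfolding cycle_edges_image by (simp add: card_image inj_on_cycle_edge)

lemma even_cuts_cycle_edges:
  assumes "is_cycle E vs"
  shows "even_cuts (cycle_edges vs)"
  unfolding even_cuts_def
proof
  fix P :: "'a \<Rightarrow> bool"
  define n where "n = length vs"
  define edge where "edge i = {vs ! i, vs ! (Suc i mod n)}" for i
  define I where "I = {i \<in> {..<n}. P (vs ! i) \<noteq> P (vs ! (Suc i mod n))}"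
  have "cut_edges P (cycle_edges vs) = edge ` I"
    unfolding cycle_edges_image I_def edge_def n_def cut_edges_def by auto
  moreover have "inj_on edge I"
    using inj_on_cycle_edge[OF assms] unfolding edge_def I_def n_def
    by (rule inj_on_subset) auto
  moreover have "even (card I)"
    unfolding I_def by (rule even_card_disagreements) (simp_all add: bij_betw_Suc_mod)
  ultimately show "even (card (cut_edges P (cycle_edges vs)))"
    by (simp add: card_image)
qed

lemma odd_cyclesD:
  assumes "C \<in> odd_cycles E"
  shows "C \<subseteq> E" "finite C" "odd (card C)" "even_cuts C"
proof -
  obtain vs where vs: "C = cycle_edges vs" "is_cycle E vs" "odd (length vs)"
    using assms unfolding odd_cycles_def by blast
  then show "C \<subseteq> E" "odd (card C)" "even_cuts C"
    using cycle_edges_subset[OF vs(2)] card_cycle_edges[OF vs(2)] even_cuts_cycle_edges[OF vs(2)]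
    by simp_all
  show "finite C"
    unfolding vs(1) cycle_edges_image by simp
qed

section \<open>Graphs without odd cycles are bipartite\<close>

lemma rtrancl_path_last: "rtrancl_path r x xs y \<Longrightarrow> xs \<noteq> [] \<Longrightarrow> last xs = y"
  by (induction rule: rtrancl_path.induct) (auto elim: rtrancl_path.cases)

lemma rtrancl_path_nth: "rtrancl_path r x xs y \<Longrightarrow> i < length xs \<Longrightarrow> r ((x # xs) ! i) (xs ! i)"
proof (induction arbitrary: i rule: rtrancl_path.induct)
  case (step x y ys z)
  then show ?case
    by (cases i) auto
qed simp

lemma rtrancl_path_two_colouring:
  assumes "\<And>a b. r a b \<Longrightarrow> c a \<noteq> c b" "\<And>a. c a < (2::nat)"
  shows "rtrancl_path r x xs y \<Longrightarrow> c x = c y \<longleftrightarrow> even (length xs)"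
proof (induction rule: rtrancl_path.induct)
  case (step x y ys z)
  moreover have "c x \<noteq> c y" "c x < 2" "c y < 2" "c z < 2"
    using assms step.hyps(1) by auto
  ultimately show ?case
    by auto
qed simp

lemma is_cycle_close_path:
  assumes path: "rtrancl_path (\<lambda>a b. {a, b} \<in> Z) u ps v"
    and "distinct (u # ps)" "2 \<le> length ps"
  shows "is_cycle (insert {u, v} Z) (u # ps)"
  unfolding is_cycle_def
proof (intro conjI allI impI)
  show "3 \<le> length (u # ps)" "distinct (u # ps)"
    using assms(2,3) by simp_all
  fix i
  assume "i < length (u # ps)"
  then consider "i < length ps" | "i = length ps"
    by fastforce
  then show "{(u # ps) ! i, (u # ps) ! ((i + 1) mod length (u # ps))} \<in> insert {u, v} Z"
  proof cases
    case 1
    then show ?thesis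
      using rtrancl_path_nth[OF path 1] by simp
  next
    case 2
    have "(u # ps) ! length ps = v"
      using rtrancl_path_last[OF path] assms(3) by (auto simp: last_conv_nth nth_Cons')
    then show ?thesis
      using 2 by (simp add: insert_commute)
  qed
qed

lemma colouring_insert_doubleton:
  "colouring V (insert {u, v} S) k f \<longleftrightarrow> colouring V S k f \<and> (u \<noteq> v \<longrightarrow> f u \<noteq> f v)"
  unfolding colouring_def by auto

lemma colouring_flip:
  assumes c: "colouring UNIV Z 2 c" and card2: "\<forall>e\<in>Z. card e = 2"
    and closed: "\<And>x y. {x, y} \<in> Z \<Longrightarrow> x \<in> R \<longleftrightarrow> y \<in> R"
  shows "colouring UNIV Z 2 (\<lambda>x. if x \<in> R then 1 - c x else c x)"
proof -
  have c_lt: "\<And>x. c x < 2" and c_edge: "\<And>x y. {x, y} \<in> Z \<Longrightarrow> c x \<noteq> c y"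
    using c unfolding colouring_edge_iff[OF card2] by auto
  have "(if x \<in> R then 1 - c x else c x) \<noteq> (if y \<in> R then 1 - c y else c y)" if "{x, y} \<in> Z" for x y
    using c_lt[of x] c_lt[of y] c_edge[OF that] closed[OF that] by auto
  then show ?thesis
    unfolding colouring_edge_iff[OF card2] using c_lt by auto
qed

text \<open>If the ends of the new edge have the same colour and lie in one component, a path between
  them closes an odd cycle; otherwise flipping the colours on the component of one end repairs the
  colouring.\<close>
lemma two_colouring_insert_edge:
  assumes c: "colouring UNIV Z 2 c" and card2: "\<forall>e\<in>Z. card e = 2" and "u \<noteq> v"
    and no_odd: "\<nexists>vs. is_cycle (insert {u, v} Z) vs \<and> odd (length vs)"
  shows "\<exists>c'. colouring UNIV (insert {u, v} Z) 2 c'"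
proof (cases "c u = c v")
  case False
  with c have "colouring UNIV (insert {u, v} Z) 2 c"
    by (simp add: colouring_insert_doubleton)
  then show ?thesis
    by blast
next
  case True
  let ?r = "\<lambda>a b. {a, b} \<in> Z"
  have c_lt: "\<And>x. c x < 2" and c_edge: "\<And>x y. ?r x y \<Longrightarrow> c x \<noteq> c y"
    using c unfolding colouring_edge_iff[OF card2] by auto
  have not_connected: "\<not> ?r\<^sup>*\<^sup>* u v"
  proof
    assume "?r\<^sup>*\<^sup>* u v"
    then obtain ps where "rtrancl_path ?r u ps v"
      by (auto simp: rtranclp_eq_rtrancl_path)
    then obtain ps where ps: "rtrancl_path ?r u ps v" "distinct (u # ps)"
      by (rule rtrancl_path_distinct)
    have "even (length ps)"
      using rtrancl_path_two_colouring[where r = ?r and c = c, OF c_edge c_lt ps(1)] True by simp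
    moreover have "length ps \<noteq> 0"
      using ps(1) \<open>u \<noteq> v\<close> by (auto elim: rtrancl_path.cases)
    ultimately have "2 \<le> length ps"
      by presburger
    with ps have "is_cycle (insert {u, v} Z) (u # ps)"
      by (intro is_cycle_close_path)
    with \<open>even (length ps)\<close> no_odd show False
      by auto
  qed
  define R where "R = {x. ?r\<^sup>*\<^sup>* u x}"
  have "x \<in> R \<longleftrightarrow> y \<in> R" if "{x, y} \<in> Z" for x y
  proof -
    have "?r x y" "?r y x"
      using that by (simp_all add: insert_commute)
    then show ?thesis
      unfolding R_def by (auto intro: rtranclp.rtrancl_into_rtrancl)
  qed
  then have "colouring UNIV Z 2 (\<lambda>x. if x \<in> R then 1 - c x else c x)"
    by (rule colouring_flip[OF c card2])
  moreover have "u \<in> R" "v \<notin> R"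
    unfolding R_def using not_connected by auto
  moreover have "1 - c u \<noteq> c v"
    using True c_lt[of u] by presburger
  ultimately have "colouring UNIV (insert {u, v} Z) 2 (\<lambda>x. if x \<in> R then 1 - c x else c x)"
    by (simp add: colouring_insert_doubleton)
  then show ?thesis
    by blast
qed

lemma two_colourable_if_no_odd_cycle:
  assumes "finite Z" "\<forall>e\<in>Z. card e = 2" "\<nexists>vs. is_cycle Z vs \<and> odd (length vs)"
  shows "\<exists>c. colouring UNIV Z 2 c"
  using assms
proof (induction rule: finite_induct)
  case empty
  have "colouring UNIV {} 2 (\<lambda>_. 0)"
    unfolding colouring_def by simp
  then show ?case
    by blast
next
  case (insert e Z)
  obtain u v where e: "e = {u, v}" "u \<noteq> v"
    using insert.prems(1) by (meson card_2_iff insertI1)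
  have "\<nexists>vs. is_cycle Z vs \<and> odd (length vs)"
    using insert.prems(2) is_cycle_mono by blast
  then obtain c where "colouring UNIV Z 2 c"
    using insert.IH insert.prems(1) by blast
  then show ?case
    using two_colouring_insert_edge insert.prems e by simp
qed

lemma two_colourable_iff_no_odd_cycle:
  assumes G: "simple_graph V E" and "S \<subseteq> E"
  shows "(\<exists>c. colouring V S 2 c) \<longleftrightarrow> (\<forall>C\<in>odd_cycles E. \<not> C \<subseteq> S)"
proof
  assume "\<exists>c. colouring V S 2 c"
  then obtain c where c: "colouring V S 2 c"
    by blast
  show "\<forall>C\<in>odd_cycles E. \<not> C \<subseteq> S"
  proof (intro ballI notI)
    fix C
    assume C: "C \<in> odd_cycles E" and "C \<subseteq> S"
    with c have "colouring V C 2 c"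
      by (blast intro: colouring_mono)
    moreover have "\<forall>e\<in>C. e \<subseteq> V \<and> card e = 2"
      using G odd_cyclesD(1)[OF C] unfolding simple_graph_def by blast
    ultimately have "even (card C)"
      using even_card_if_even_cuts_two_colouring odd_cyclesD(4)[OF C] by blast
    with odd_cyclesD(3)[OF C] show False
      by blast
  qed
next
  assume no_odd: "\<forall>C\<in>odd_cycles E. \<not> C \<subseteq> S"
  have "\<nexists>vs. is_cycle S vs \<and> odd (length vs)"
  proof
    assume "\<exists>vs. is_cycle S vs \<and> odd (length vs)"
    then obtain vs where vs: "is_cycle S vs" "odd (length vs)"
      by blast
    then have "cycle_edges vs \<in> odd_cycles E"
      using is_cycle_mono[OF vs(1) \<open>S \<subseteq> E\<close>] unfolding odd_cycles_def by blast
    with no_odd cycle_edges_subset[OF vs(1)] show False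
      by blast
  qed
  moreover have "simple_graph V S"
    using G \<open>S \<subseteq> E\<close> by (rule simple_graph_subset)
  then have "finite S" "\<forall>e\<in>S. card e = 2"
    using simple_graph_finite_edges unfolding simple_graph_def by blast+
  ultimately obtain c where "colouring UNIV S 2 c"
    using two_colourable_if_no_odd_cycle by blast
  then have "colouring V S 2 c"
    by (rule colouring_mono) simp_all
  then show "\<exists>c. colouring V S 2 c"
    by blast
qed

lemma odd_cycle_within_if_even_cuts:
  assumes G: "simple_graph V E" and "Z \<subseteq> E" "even_cuts Z" "odd (card Z)"
  shows "\<exists>C\<in>odd_cycles E. C \<subseteq> Z"
proof -
  have "\<forall>e\<in>Z. e \<subseteq> V \<and> card e = 2"
    using G \<open>Z \<subseteq> E\<close> unfolding simple_graph_def by blast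
  then have "\<not> colouring V Z 2 c" for c
    using even_card_if_even_cuts_two_colouring assms(3,4) by blast
  then show ?thesis
    using two_colourable_iff_no_odd_cycle[OF G \<open>Z \<subseteq> E\<close>] by blast
qed

lemma odd_cycle_within_sym_diff:
  assumes G: "simple_graph V E" and C: "C1 \<in> odd_cycles E" "C2 \<in> odd_cycles E" "C3 \<in> odd_cycles E"
  shows "\<exists>C\<in>odd_cycles E. C \<subseteq> sym_diff (sym_diff C1 C2) C3"
proof (rule odd_cycle_within_if_even_cuts[OF G])
  note odd_cyclesD[OF C(1)] odd_cyclesD[OF C(2)] odd_cyclesD[OF C(3)]
  moreover have "finite (sym_diff C1 C2)"
    using calculation by blast
  ultimately show "sym_diff (sym_diff C1 C2) C3 \<subseteq> E"
    and "even_cuts (sym_diff (sym_diff C1 C2) C3)"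
    and "odd (card (sym_diff (sym_diff C1 C2) C3))"
    by (blast, simp_all add: even_cuts_sym_diff even_card_sym_diff_iff)
qed

section \<open>(3,2)-critical graphs\<close>

lemma chromatic_number_delete_edge:
  assumes "simple_graph V E" "e \<in> E"
  shows "chromatic_number V E \<le> chromatic_number V (E - {e}) + 1"
  using chromatic_number_insert_le[of V e "E - {e}"] assms by (simp add: insert_absorb)

lemma critical_3_2_edge_avoided_by_odd_cycle:
  assumes G: "simple_graph V E" and crit: "critical_3_2 V E" and "f \<in> E"
  shows "\<exists>C\<in>odd_cycles E. f \<notin> C"
proof (rule ccontr)
  assume "\<not> (\<exists>C\<in>odd_cycles E. f \<notin> C)"
  then have "\<forall>C\<in>odd_cycles E. \<not> C \<subseteq> E - {f}"
    by blast
  then have "chromatic_number V (E - {f}) \<le> 2"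
    using two_colourable_iff_no_odd_cycle[OF G] chromatic_number_le_iff simple_graph_subset[OF G]
    by (metis Diff_subset)
  moreover have "chromatic_number V E = 3" "es_chi V E = 2"
    using crit unfolding critical_3_2_def by auto
  moreover have "chromatic_number V E \<le> chromatic_number V (E - {f}) + 1"
    using G \<open>f \<in> E\<close> by (rule chromatic_number_delete_edge)
  ultimately have "chromatic_number V (E - {f}) = chromatic_number V E - 1"
    by linarith
  then have "es_chi V E \<le> card {f}"
    using \<open>f \<in> E\<close> by (intro es_chi_le) auto
  with \<open>es_chi V E = 2\<close> show False
    by simp
qed

text \<open>Criticality gives \<open>es\<^sub>\<chi>(G - e) \<le> 1\<close>: deleting one further edge \<open>f\<close> from \<open>G - e\<close>
  leaves a graph of chromatic number at most 2, which therefore contains no odd cycle.\<close>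
lemma critical_3_2_odd_cycle_cover_pair:
  assumes G: "simple_graph V E" and crit: "critical_3_2 V E" and "e \<in> E"
  shows "\<exists>f. \<forall>C\<in>odd_cycles E. e \<in> C \<or> f \<in> C"
proof -
  define S where "S = E - {e}"
  have S: "simple_graph V S" "S \<subseteq> E"
    unfolding S_def using G by (auto intro: simple_graph_subset)
  have chi: "chromatic_number V E = 3" and "es_chi V S < 2"
    using crit \<open>e \<in> E\<close> unfolding critical_3_2_def edge_stability_critical_def S_def by auto
  have "2 \<le> chromatic_number V S" "chromatic_number V S \<le> 3"
    using chromatic_number_delete_edge[OF G \<open>e \<in> E\<close>] chromatic_number_mono[OF G S(2)] chi
    unfolding S_def by auto
  then obtain F where F: "F \<subseteq> S" "card F = es_chi V S"
    "chromatic_number V (S - F) = chromatic_number V S - 1"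
    using es_chi_witness[OF S(1)] by blast
  have "finite F"
    using F(1) simple_graph_finite_edges[OF S(1)] by (rule finite_subset)
  moreover have "F \<noteq> {}"
    using F(3) \<open>2 \<le> chromatic_number V S\<close> by auto
  ultimately have "card F \<noteq> 0"
    by simp
  then have "card F = 1"
    using F(2) \<open>es_chi V S < 2\<close> by linarith
  then obtain f where "F = {f}"
    by (auto simp: card_1_singleton_iff)
  have "chromatic_number V (S - F) \<le> 2"
    using F(3) \<open>chromatic_number V S \<le> 3\<close> by linarith
  then have "\<exists>c. colouring V (S - F) 2 c"
    using chromatic_number_le_iff[OF simple_graph_subset[OF S(1) Diff_subset]] by blast
  moreover have "S - F \<subseteq> E"
    using S(2) by blast
  ultimately have no_odd: "\<forall>C\<in>odd_cycles E. \<not> C \<subseteq> S - F"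
    using two_colourable_iff_no_odd_cycle[OF G] by blast
  have "e \<in> C \<or> f \<in> C" if "C \<in> odd_cycles E" for C
    using no_odd that odd_cyclesD(1)[OF that] \<open>F = {f}\<close> unfolding S_def by blast
  then show ?thesis
    by blast
qed

lemma three_sets_pair_cover_intersect:
  assumes "card \<C> = 3" "C \<in> \<C>"
    and cover: "\<forall>e\<in>\<Union>\<C>. \<exists>f. \<forall>D\<in>\<C>. e \<in> D \<or> f \<in> D"
  shows "\<exists>D\<in>\<C> - {C}. C \<inter> D \<noteq> {}"
proof (rule ccontr)
  assume disjoint: "\<not> (\<exists>D\<in>\<C> - {C}. C \<inter> D \<noteq> {})"
  have "card (\<C> - {C}) = 2"
    using assms(1,2) by simp
  then obtain A B where "\<C> - {C} = {A, B}" "A \<noteq> B"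
    by (meson card_2_iff)
  then obtain e D1 D2 where D: "D1 \<in> \<C> - {C}" "D2 \<in> \<C> - {C}" "e \<in> D1" "e \<notin> D2"
    by blast
  then obtain f where "\<forall>D\<in>\<C>. e \<in> D \<or> f \<in> D"
    using cover by blast
  moreover have "e \<notin> C"
    using disjoint D by blast
  ultimately have "f \<in> C \<inter> D2"
    using D assms(2) by blast
  with disjoint D(2) show False
    by blast
qed

lemma disjoint_if_subset_sym_diff3:
  assumes "C \<in> {C1, C2, C3}" "D \<in> {C1, C2, C3}" "C \<noteq> D"
    and "C \<subseteq> sym_diff (sym_diff C1 C2) C3" "C1 \<inter> C2 \<inter> C3 = {}"
  shows "C \<inter> D = {}"
  using assms by auto

theorem theorem2p4:
  fixes V :: "'a set" and E :: "'a set set"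
  assumes "simple_graph V E"
    and "critical_3_2 V E"
  shows "card (odd_cycles E) \<noteq> 3"
proof
  assume three: "card (odd_cycles E) = 3"
  then obtain C1 C2 C3 where OC: "odd_cycles E = {C1, C2, C3}"
    by (auto simp: card_3_iff)
  then have "C1 \<in> odd_cycles E" "C2 \<in> odd_cycles E" "C3 \<in> odd_cycles E"
    by auto
  from odd_cycle_within_sym_diff[OF assms(1) this]
  obtain C where C: "C \<in> odd_cycles E" "C \<subseteq> sym_diff (sym_diff C1 C2) C3"
    by blast
  have "f \<notin> C1 \<inter> C2 \<inter> C3" for f
  proof
    assume f: "f \<in> C1 \<inter> C2 \<inter> C3"
    then have "f \<in> E"
      using odd_cyclesD(1) OC by blast
    then obtain D where "D \<in> odd_cycles E" "f \<notin> D"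
      using critical_3_2_edge_avoided_by_odd_cycle[OF assms] by blast
    with f OC show False
      by auto
  qed
  then have "C \<inter> D = {}" if "D \<in> odd_cycles E - {C}" for D
    using disjoint_if_subset_sym_diff3[of C C1 C2 C3 D] C that OC by auto
  moreover have "\<exists>f. \<forall>D\<in>odd_cycles E. e \<in> D \<or> f \<in> D" if "e \<in> \<Union>(odd_cycles E)" for e
    using critical_3_2_odd_cycle_cover_pair[OF assms] odd_cyclesD(1) that by blast
  ultimately show False
    using three_sets_pair_cover_intersect[OF three C(1)] by blast
qed

end
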